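(* For $n\geq1$ let $\ell_n=\sqrt[n]{n!}$ and $x_n=\log(\ell_{n+1}/\ell_n)$. Then for every integer $n\geq 2$, $$x_n\leq \frac1n-\frac{\log n}{2n(n+1)}-\frac{\log(2\pi)}{2n(n+1)}-\frac{83}{144n^3}+\frac{3}{2n^4},$$ and for every integer $n\geq3$, $$x_n\leq \frac1n-\frac{\log n}{2n(n+1)}-\frac{\log(2\pi)}{2n(n+1)}.$$
   Context: $\log$ denotes the natural logarithm. *)

theory Defs
  imports Complex_Main
begin

definition ell :: "nat \<Rightarrow> real" where
  "ell n = root n (fact n)"

definition xseq :: "nat \<Rightarrow> real" where
  "xseq n = ln (ell (n + 1) / ell n)"

end

theory Submission
  imports Defs "HOL-Analysis.Gamma_Function" "HOL-Real_Asymp.Real_Asymp"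
begin

text \<open>
  Since \<open>x\<^sub>n = (n ln (n + 1) - ln n!) / (n (n + 1))\<close>, everything hinges on a lower bound
  for the Stirling remainder \<open>\<rho>\<^sub>n = ln n! - (n + 1/2) ln n + n\<close>. With \<open>t = 1/(2n + 1)\<close>
  one has \<open>ln ((n + 1)/n) = ln (1 + t) - ln (1 - t)\<close>, and the first terms of its odd power series
  give \<open>1/(12(n + 1)) - 1/(12(n + 2)) \<le> \<rho>\<^sub>n - \<rho>\<^sub>n\<^sub>+\<^sub>1 \<le> 1/(8n) - 1/(8(n + 1))\<close>.
  Hence \<open>\<rho>\<close> converges, Wallis' product identifies the limit as \<open>ln (2\<pi>)/2\<close>, and since
  \<open>\<rho>\<^sub>n - 1/(12(n + 1))\<close> decreases to that limit, \<open>\<rho>\<^sub>n \<ge> ln (2\<pi>)/2 + 1/(12(n + 1))\<close>.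
  The two bounds then follow from \<open>ln (1 + 1/n) \<le> 1/n - 1/(2n\<^sup>2) + 1/(3n\<^sup>3)\<close> and from
  \<open>ln (1 + 1/n) \<le> 1/n\<close>; both actually hold for all \<open>n \<ge> 1\<close>.
\<close>

lemma ln_add_one_le_cubic:
  fixes x :: real
  assumes "0 \<le> x"
  shows "ln (1 + x) \<le> x - x^2/2 + x^3/3"
proof -
  let ?f = "\<lambda>y::real. y - y^2/2 + y^3/3 - ln (1 + y)"
  have "?f 0 \<le> ?f x"
  proof (rule DERIV_nonneg_imp_nondecreasing[OF assms])
    fix y :: real
    assume "0 \<le> y" "y \<le> x"
    then have "(?f has_real_derivative y^3/(1 + y)) (at y)"
      by (auto intro!: derivative_eq_intros simp: field_simps power2_eq_square power3_eq_cube)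
    with \<open>0 \<le> y\<close> show "\<exists>d. (?f has_real_derivative d) (at y) \<and> 0 \<le> d"
      by auto
  qed
  then show ?thesis by simp
qed

lemma ln_ratio_ge:
  fixes t :: real
  assumes "0 \<le> t" "t < 1"
  shows "2*t + 2*t^3/3 \<le> ln (1 + t) - ln (1 - t)"
proof -
  let ?f = "\<lambda>x::real. ln (1 + x) - ln (1 - x) - 2*x - 2*x^3/3"
  have "?f 0 \<le> ?f t"
  proof (rule DERIV_nonneg_imp_nondecreasing[OF assms(1)])
    fix x :: real
    assume "0 \<le> x" "x \<le> t"
    then have "0 \<le> x" "x < 1" using assms by auto
    then have "x^2 < 1" by (simp add: abs_square_less_1)
    with \<open>0 \<le> x\<close> \<open>x < 1\<close> have "(?f has_real_derivative 2*x^4/(1 - x^2)) (at x)"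
      by (auto intro!: derivative_eq_intros simp: field_simps power2_eq_square power4_eq_xxxx)
    with \<open>x^2 < 1\<close> show "\<exists>d. (?f has_real_derivative d) (at x) \<and> 0 \<le> d"
      by auto
  qed
  then show ?thesis by simp
qed

lemma ln_ratio_le:
  fixes t :: real
  assumes "0 \<le> t" "t \<le> 1/3"
  shows "ln (1 + t) - ln (1 - t) \<le> 2*t + t^3"
proof -
  let ?f = "\<lambda>x::real. 2*x + x^3 - (ln (1 + x) - ln (1 - x))"
  have "?f 0 \<le> ?f t"
  proof (rule DERIV_nonneg_imp_nondecreasing[OF assms(1)])
    fix x :: real
    assume "0 \<le> x" "x \<le> t"
    then have "0 \<le> x" "x \<le> 1/3" using assms by auto
    then have "x^2 \<le> 1/9" using power_mono[of x "1/3" 2] by (simp add: power2_eq_square)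
    with \<open>0 \<le> x\<close> \<open>x \<le> 1/3\<close> have "(?f has_real_derivative x^2 * (1 - 3*x^2)/(1 - x^2)) (at x)"
      by (auto intro!: derivative_eq_intros simp: field_simps power2_eq_square power4_eq_xxxx)
    with \<open>x^2 \<le> 1/9\<close> show "\<exists>d. (?f has_real_derivative d) (at x) \<and> 0 \<le> d"
      by auto
  qed
  then show ?thesis by simp
qed

lemma ln_add_one_minus_ln_eq:
  fixes x :: real
  assumes "0 < x"
  shows "ln (x + 1) - ln x = ln (1 + 1/(2*x + 1)) - ln (1 - 1/(2*x + 1))"
proof -
  have "0 < 1 + 1/(2*x + 1)" "0 < 1 - 1/(2*x + 1)"
    using assms by (simp_all add: field_simps)
  then have "ln (1 + 1/(2*x + 1)) - ln (1 - 1/(2*x + 1)) = ln ((1 + 1/(2*x + 1)) / (1 - 1/(2*x + 1)))"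
    by (rule ln_divide_pos[symmetric])
  also have "(1 + 1/(2*x + 1)) / (1 - 1/(2*x + 1)) = (x + 1) / x"
    using assms by (simp add: divide_simps)
  finally show ?thesis
    using assms by (simp add: ln_divide_pos)
qed

definition stirling_rem :: "nat \<Rightarrow> real" where
  "stirling_rem n = ln (fact n) - (real n + 1/2) * ln (real n) + real n"

lemma ln_fact_Suc: "ln (fact (Suc n) :: real) = ln (real n + 1) + ln (fact n)"
  by (simp add: ln_mult add.commute)

lemma stirling_rem_diff:
  "stirling_rem n - stirling_rem (Suc n) = (real n + 1/2) * (ln (real n + 1) - ln (real n)) - 1"
  unfolding stirling_rem_def ln_fact_Suc by (simp add: algebra_simps)

lemma stirling_rem_diff_ge:
  assumes "1 \<le> n"
  shows "1/(12*(real n + 1)) - 1/(12*(real n + 2)) \<le> stirling_rem n - stirling_rem (Suc n)"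
proof -
  define t :: real where "t = 1/(2*real n + 1)"
  have "0 \<le> t" "t < 1" using assms by (auto simp: t_def)
  then have "2*t + 2*t^3/3 \<le> ln (1 + t) - ln (1 - t)" by (rule ln_ratio_ge)
  also have "\<dots> = ln (real n + 1) - ln (real n)"
    using ln_add_one_minus_ln_eq[of "real n"] assms by (simp add: t_def)
  finally have "2*t + 2*t^3/3 \<le> ln (real n + 1) - ln (real n)" .
  then have "(real n + 1/2) * (2*t + 2*t^3/3) - 1 \<le> stirling_rem n - stirling_rem (Suc n)"
    unfolding stirling_rem_diff by (intro diff_right_mono mult_left_mono) auto
  moreover have "(real n + 1/2) * (2*t + 2*t^3/3) - 1 = 1/(3*(2*real n + 1)^2)"
  proof -
    have "(2*real n + 1) * t = 1" by (simp add: t_def)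
    then have "(real n + 1/2) * (2*t + 2*t^3/3) - 1 = t^2/3" by algebra
    then show ?thesis by (simp add: t_def power_divide)
  qed
  moreover have "1/(12*(real n + 1)) - 1/(12*(real n + 2)) = 1/(12*(real n + 1)*(real n + 2))"
    by (simp add: divide_simps)
  moreover have "1/(12*(real n + 1)*(real n + 2)) \<le> 1/(3*(2*real n + 1)^2)"
  proof (rule frac_le)
    show "0 < 3*(2*real n + 1)^2" by simp
  qed (simp_all add: power2_eq_square algebra_simps)
  ultimately show ?thesis by linarith
qed

lemma stirling_rem_diff_le:
  assumes "1 \<le> n"
  shows "stirling_rem n - stirling_rem (Suc n) \<le> 1/(8*real n) - 1/(8*(real n + 1))"
proof -
  define t :: real where "t = 1/(2*real n + 1)"
  have "0 \<le> t" "t \<le> 1/3" using assms by (auto simp: t_def field_simps)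
  have "ln (real n + 1) - ln (real n) = ln (1 + t) - ln (1 - t)"
    using ln_add_one_minus_ln_eq[of "real n"] assms by (simp add: t_def)
  also have "\<dots> \<le> 2*t + t^3" using \<open>0 \<le> t\<close> \<open>t \<le> 1/3\<close> by (rule ln_ratio_le)
  finally have "ln (real n + 1) - ln (real n) \<le> 2*t + t^3" .
  then have "stirling_rem n - stirling_rem (Suc n) \<le> (real n + 1/2) * (2*t + t^3) - 1"
    unfolding stirling_rem_diff by (intro diff_right_mono mult_left_mono) auto
  moreover have "(real n + 1/2) * (2*t + t^3) - 1 = 1/(2*(2*real n + 1)^2)"
  proof -
    have "(2*real n + 1) * t = 1" by (simp add: t_def)
    then have "(real n + 1/2) * (2*t + t^3) - 1 = t^2/2" by algebra
    then show ?thesis by (simp add: t_def power_divide)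
  qed
  moreover have "1/(8*real n) - 1/(8*(real n + 1)) = 1/(8*real n*(real n + 1))"
    using assms by (simp add: divide_simps)
  moreover have "1/(2*(2*real n + 1)^2) \<le> 1/(8*real n*(real n + 1))"
  proof (rule frac_le)
    show "0 < 8*real n*(real n + 1)" using assms by simp
  qed (simp_all add: power2_eq_square algebra_simps)
  ultimately show ?thesis by linarith
qed

lemma stirling_rem_ge_seven_eighths:
  assumes "1 \<le> n"
  shows "7/8 \<le> stirling_rem n"
proof -
  have "7/8 \<le> stirling_rem n - 1/(8*real n)"
    using assms
  proof (induction n rule: dec_induct)
    case base
    show ?case by (simp add: stirling_rem_def)
  next
    case (step k)
    then show ?case using stirling_rem_diff_le[of k] by (simp add: add.commute)
  qed
  moreover have "0 \<le> 1/(8*real n)"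
    by simp
  ultimately show ?thesis
    by linarith
qed

definition wallis_partial_prod :: "nat \<Rightarrow> real" where
  "wallis_partial_prod n = (\<Prod>k=1..n. 4 * real k ^ 2 / (4 * real k ^ 2 - 1))"

lemma wallis_partial_prod_eq:
  "wallis_partial_prod n = 16 ^ n * fact n ^ 4 / (fact (2*n) ^ 2 * (2 * real n + 1))"
proof (induction n)
  case 0
  then show ?case by (simp add: wallis_partial_prod_def)
next
  case (Suc n)
  have step: "c * A ^ 4 / (B ^ 2 * (2*x + 1)) * (4 * (x + 1) ^ 2 / ((2*x + 1) * (2*x + 3)))
      = 16 * c * ((x + 1) * A) ^ 4 / (((2*x + 1) * (2*x + 2) * B) ^ 2 * (2*x + 3))"
    if "0 \<le> x" "B \<noteq> 0" for x A B c :: real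
  proof -
    have "2*x + 1 \<noteq> 0" "2*x + 3 \<noteq> 0" "x + 1 \<noteq> 0" using that(1) by auto
    with that(2) show ?thesis by (simp add: divide_simps) algebra
  qed
  have "wallis_partial_prod (Suc n)
      = wallis_partial_prod n * (4 * real (Suc n) ^ 2 / (4 * real (Suc n) ^ 2 - 1))"
    by (simp add: wallis_partial_prod_def prod.nat_ivl_Suc')
  moreover have "4 * real (Suc n) ^ 2 - 1 = (2 * real n + 1) * (2 * real n + 3)"
    by (simp add: power2_eq_square algebra_simps)
  moreover have "fact (2 * Suc n) = (2 * real n + 1) * (2 * real n + 2) * fact (2*n)"
    by (simp add: algebra_simps)
  ultimately show ?case
    using step[where x = "real n" and A = "fact n" and B = "fact (2*n)" and c = "16 ^ n"]
    by (simp add: Suc.IH add.commute)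
qed

lemma ln_wallis_partial_prod:
  assumes "1 \<le> n"
  shows "ln (wallis_partial_prod n)
           = 4 * stirling_rem n - 2 * stirling_rem (2*n) + ln (real n) - ln 2 - ln (2 * real n + 1)"
proof -
  have "ln (wallis_partial_prod n)
      = n * ln 16 + 4 * ln (fact n) - (2 * ln (fact (2*n)) + ln (2 * real n + 1))"
    unfolding wallis_partial_prod_eq by (simp add: ln_div ln_mult ln_realpow)
  moreover have "ln (16::real) = 4 * ln 2"
    using ln_realpow[of 2 4] by simp
  moreover have "ln (real (2*n)) = ln 2 + ln (real n)"
    using assms by (simp add: ln_mult)
  ultimately show ?thesis by (simp add: stirling_rem_def algebra_simps)
qed

lemma stirling_rem_tendsto: "stirling_rem \<longlonglongrightarrow> ln (2*pi) / 2"
proof -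
  have "decseq (\<lambda>m. stirling_rem (Suc m))"
  proof (rule decseq_SucI)
    fix m
    have "0 \<le> 1/(12*(real (Suc m) + 1)) - 1/(12*(real (Suc m) + 2))"
      by (simp add: divide_simps)
    with stirling_rem_diff_ge[of "Suc m"] show "stirling_rem (Suc (Suc m)) \<le> stirling_rem (Suc m)"
      by linarith
  qed
  moreover have "\<forall>m. 7/8 \<le> stirling_rem (Suc m)"
    using stirling_rem_ge_seven_eighths by simp
  ultimately obtain L where "(\<lambda>m. stirling_rem (Suc m)) \<longlonglongrightarrow> L"
    by (rule decseq_convergent)
  then have L: "stirling_rem \<longlonglongrightarrow> L"
    by (rule LIMSEQ_imp_Suc)
  have "(\<lambda>n. stirling_rem (2*n)) \<longlonglongrightarrow> L"
    using LIMSEQ_subseq_LIMSEQ[OF L, of "\<lambda>n. 2*n"] by (simp add: strict_mono_def o_def)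
  moreover have "(\<lambda>n. ln (real n) - ln 2 - ln (2 * real n + 1)) \<longlonglongrightarrow> - 2 * ln 2"
    by real_asymp
  ultimately have "(\<lambda>n. 4 * stirling_rem n - 2 * stirling_rem (2*n)
                          + (ln (real n) - ln 2 - ln (2 * real n + 1)))
                   \<longlonglongrightarrow> 4 * L - 2 * L + - 2 * ln 2"
    by (intro tendsto_intros L)
  then have "(\<lambda>n. ln (wallis_partial_prod n)) \<longlonglongrightarrow> 4 * L - 2 * L + - 2 * ln 2"
    by (rule Lim_transform_eventually)
      (use eventually_ge_at_top[of 1] in \<open>eventually_elim, simp add: ln_wallis_partial_prod\<close>)
  moreover have "(\<lambda>n. ln (wallis_partial_prod n)) \<longlonglongrightarrow> ln (pi/2)"
    unfolding wallis_partial_prod_def by (intro tendsto_ln wallis) simp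
  ultimately have "ln (pi/2) = 2 * L - 2 * ln 2"
    using LIMSEQ_unique by fastforce
  then have "L = ln (2*pi) / 2"
    by (simp add: ln_divide_pos ln_mult)
  with L show ?thesis by simp
qed

lemma stirling_rem_ge:
  assumes "1 \<le> n"
  shows "ln (2*pi) / 2 + 1/(12*(real n + 1)) \<le> stirling_rem n"
proof -
  define g where "g m = stirling_rem (Suc m) - 1/(12*(real (Suc m) + 1))" for m
  have "decseq g"
  proof (rule decseq_SucI)
    fix m
    have "real (Suc (Suc m)) + 1 = real (Suc m) + 2" by simp
    with stirling_rem_diff_ge[of "Suc m"] show "g (Suc m) \<le> g m"
      unfolding g_def by simp
  qed
  moreover have "g \<longlonglongrightarrow> ln (2*pi) / 2"
  proof -
    have "g \<longlonglongrightarrow> ln (2*pi) / 2 - 0"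
      unfolding g_def by (intro tendsto_diff LIMSEQ_Suc[OF stirling_rem_tendsto]) real_asymp
    then show ?thesis by simp
  qed
  ultimately have "ln (2*pi) / 2 \<le> g (n - 1)"
    by (rule decseq_ge)
  with assms show ?thesis by (simp add: g_def of_nat_diff add.commute)
qed

lemma xseq_eq:
  assumes "1 \<le> n"
  shows "xseq n = (real n * ln (1 + 1/real n) + real n - ln (real n)/2 - stirling_rem n)
                    / (real n * (real n + 1))"
proof -
  have alg: "(l + a + F) / (x + 1) - F / x = (x * a + x - l/2 - R) / (x * (x + 1))"
    if "F = R + (x + 1/2) * l - x" "0 < x" for x l a F R :: real
    using that(2) unfolding that(1) by (simp add: divide_simps) (simp add: algebra_simps)
  have "0 < ell n" "0 < ell (n + 1)"
    using assms by (auto simp: ell_def)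
  then have "xseq n = ln (fact (n + 1)) / (real n + 1) - ln (fact n) / real n"
    using assms by (simp add: xseq_def ell_def ln_div ln_root add.commute)
  moreover have "ln (fact (n + 1) :: real) = ln (real n) + ln (1 + 1/real n) + ln (fact n)"
    using ln_fact_Suc[of n] assms by (simp add: ln_div divide_simps add.commute)
  ultimately have "xseq n = (ln (real n) + ln (1 + 1/real n) + ln (fact n)) / (real n + 1)
                              - ln (fact n) / real n"
    by (simp only:)
  also have "\<dots> = (real n * ln (1 + 1/real n) + real n - ln (real n)/2 - stirling_rem n)
                    / (real n * (real n + 1))"
    using assms by (intro alg) (simp_all add: stirling_rem_def)
  finally show ?thesis .
qed

lemma xseq_le:
  assumes "1 \<le> n"
  shows "xseq n \<le> 1 / real n - ln (real n) / (2 * real n * (real n + 1))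
                    - ln (2 * pi) / (2 * real n * (real n + 1))
                    + (real n * ln (1 + 1/real n) - 1 - 1/(12*(real n + 1))) / (real n * (real n + 1))"
  (is "_ \<le> ?bound")
proof -
  have "xseq n \<le> (real n * ln (1 + 1/real n) + real n - ln (real n)/2
                    - (ln (2*pi)/2 + 1/(12*(real n + 1)))) / (real n * (real n + 1))"
    unfolding xseq_eq[OF assms] using stirling_rem_ge[OF assms]
    by (intro divide_right_mono) auto
  also have "\<dots> = ?bound"
    using assms by (simp add: divide_simps) (simp add: algebra_simps)
  finally show ?thesis .
qed

lemma xseq_correction_le:
  fixes x :: real
  assumes "0 < x"
  shows "(x * ln (1 + 1/x) - 1 - 1/(12*(x + 1))) / (x * (x + 1)) \<le> 3/(2*x^4) - 83/(144*x^3)"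
proof -
  have "ln (1 + 1/x) \<le> 1/x - (1/x)^2/2 + (1/x)^3/3"
    using assms by (intro ln_add_one_le_cubic) simp
  then have "x * ln (1 + 1/x) \<le> x * (1/x - (1/x)^2/2 + (1/x)^3/3)"
    using assms by (intro mult_left_mono) auto
  also have "\<dots> = 1 - 1/(2*x) + 1/(3*x^2)"
    using assms by (simp add: field_simps power2_eq_square power3_eq_cube)
  finally have "x * ln (1 + 1/x) - 1 - 1/(12*(x + 1)) \<le> - 1/(2*x) + 1/(3*x^2) - 1/(12*(x + 1))"
    by simp
  also have "\<dots> \<le> x * (x + 1) * (3/(2*x^4) - 83/(144*x^3))"
  proof -
    define y where "y = x + 1"
    have "0 < y" using assms by (simp add: y_def)
    then have "x * y * (3/(2*x^4) - 83/(144*x^3)) - (- 1/(2*x) + 1/(3*x^2) - 1/(12*y))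
        = (x^3 + 74*x^2 + 301*x + 216) / (144*x^3*y)"
      using assms by (simp add: field_simps power2_eq_square power3_eq_cube power4_eq_xxxx)
        (simp add: y_def algebra_simps)
    moreover have "0 \<le> (x^3 + 74*x^2 + 301*x + 216) / (144*x^3*y)"
      using assms \<open>0 < y\<close> by simp
    ultimately show ?thesis unfolding y_def by linarith
  qed
  finally show ?thesis
    using assms by (simp add: divide_le_eq mult.commute)
qed

lemma xseq_correction_nonpos:
  fixes x :: real
  assumes "0 < x"
  shows "(x * ln (1 + 1/x) - 1 - 1/(12*(x + 1))) / (x * (x + 1)) \<le> 0"
proof -
  have "x * ln (1 + 1/x) \<le> x * (1/x)"
    using assms by (intro mult_left_mono ln_add_one_self_le_self) auto
  moreover have "x * (1/x) = 1" "0 \<le> 1/(12*(x + 1))"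
    using assms by simp_all
  ultimately have "x * ln (1 + 1/x) - 1 - 1/(12*(x + 1)) \<le> 0"
    by linarith
  with assms show ?thesis
    by (simp add: divide_nonpos_pos)
qed

theorem mainTheorem6:
  shows "(\<forall>n::nat. n \<ge> 2 \<longrightarrow>
            xseq n \<le> 1 / real n - ln (real n) / (2 * real n * (real n + 1))
                     - ln (2 * pi) / (2 * real n * (real n + 1))
                     - 83 / (144 * real n ^ 3) + 3 / (2 * real n ^ 4))
       \<and> (\<forall>n::nat. n \<ge> 3 \<longrightarrow>
            xseq n \<le> 1 / real n - ln (real n) / (2 * real n * (real n + 1))
                     - ln (2 * pi) / (2 * real n * (real n + 1)))"
proof (intro conjI allI impI)
  fix n :: nat
  assume "2 \<le> n"
  then show "xseq n \<le> 1 / real n - ln (real n) / (2 * real n * (real n + 1))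
                     - ln (2 * pi) / (2 * real n * (real n + 1))
                     - 83 / (144 * real n ^ 3) + 3 / (2 * real n ^ 4)"
    using xseq_le[of n] xseq_correction_le[of "real n"] by simp
next
  fix n :: nat
  assume "3 \<le> n"
  then show "xseq n \<le> 1 / real n - ln (real n) / (2 * real n * (real n + 1))
                     - ln (2 * pi) / (2 * real n * (real n + 1))"
    using xseq_le[of n] xseq_correction_nonpos[of "real n"] by simp
qed

end
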